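(* Let $l<u$ be real, let $\Delta Q$ be real with $0<\Delta Q\le u-l$, and let $\epsilon\ge0$, $0\le\delta<1$. Then for every $b>0$, $\frac{\partial \Delta C(b)}{\partial b}\le 0$, with equality if and only if $\Delta Q=u-l$. Consequently, at every $b>0$ with $\epsilon-\log\Delta C(b)-\log(1-\delta)\ne0$, $f$ is differentiable with $f'(b)\le 0$, and $f'(b)=0$ if and only if $\Delta Q=u-l$.
   Context: For $b>0$ and $p\in[l,u]$, $C_p(b)= 1-\frac12\left(e^{-\frac{p-l}{b}}+e^{-\frac{u-p}{b}}\right)$ (the integral $\int_l^u\frac{1}{2b}e^{-|x-p|/b}dx$), and $\Delta C(b)=\frac{C_{l+\Delta Q}(b)}{C_l(b)}$. The map $f$ is defined for $b>0$ with $\epsilon-\log\Delta C(b)-\log(1-\delta)\neq 0$ by $f(b)=\frac{\Delta Q}{\epsilon-\log\Delta C(b)-\log(1-\delta)}$. *)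

theory Defs
  imports Complex_Main
begin

text \<open>C_p(b) = 1 - (exp(-(p-l)/b) + exp(-(u-p)/b))/2, the Laplace(p,b) mass of [l,u].\<close>
definition Cp :: "real \<Rightarrow> real \<Rightarrow> real \<Rightarrow> real \<Rightarrow> real" where
  "Cp l u p b = 1 - (exp (- (p - l) / b) + exp (- (u - p) / b)) / 2"

definition DeltaC :: "real \<Rightarrow> real \<Rightarrow> real \<Rightarrow> real \<Rightarrow> real" where
  "DeltaC l u dQ b = Cp l u (l + dQ) b / Cp l u l b"

definition fmap :: "real \<Rightarrow> real \<Rightarrow> real \<Rightarrow> real \<Rightarrow> real \<Rightarrow> real \<Rightarrow> real" where
  "fmap l u dQ eps delta b = dQ / (eps - ln (DeltaC l u dQ b) - ln (1 - delta))"

end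

theory Submission
  imports Defs
begin

text \<open>
  Write \<open>A = exp (-\<Delta>Q/b)\<close> and \<open>B = exp (-c/b)\<close> with \<open>c = u - l - \<Delta>Q \<ge> 0\<close>.
  Then \<open>\<Delta>C(b) = (2 - A - B) / (1 - A B)\<close>, and the quotient rule gives
  \<open>\<Delta>C'(b) = - (\<Delta>Q A (1 - B)\<^sup>2 + c B (1 - A)\<^sup>2) / (b\<^sup>2 (1 - A B)\<^sup>2)\<close>, minus a sum of
  two nonnegative terms, the first positive and the second zero exactly when \<open>c = 0\<close>.
  As \<open>\<Delta>C > 0\<close>, the chain rule gives \<open>f'(b) = \<Delta>Q \<Delta>C'(b) / (\<Delta>C(b) g(b)\<^sup>2)\<close> for the
  denominator \<open>g\<close> of \<open>f\<close>, which inherits sign and zero set from \<open>\<Delta>C'(b)\<close>.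
\<close>

definition exp_ratio :: "real \<Rightarrow> real \<Rightarrow> real \<Rightarrow> real" where
  "exp_ratio d c b = (2 - exp (- d / b) - exp (- c / b)) / (1 - exp (- d / b) * exp (- c / b))"

lemma exp_neg_divide_mult: "exp (- x / b) * exp (- y / b) = exp (- (x + y) / b :: real)"
  by (simp add: exp_add [symmetric] add_divide_distrib diff_divide_distrib)

lemma DeltaC_eq_exp_ratio: "DeltaC l u dQ = exp_ratio dQ (u - l - dQ)"
proof
  fix b
  have numerator: "2 * Cp l u (l + dQ) b = 2 - exp (- dQ / b) - exp (- (u - l - dQ) / b)"
    by (simp add: Cp_def field_simps)
  have denominator: "2 * Cp l u l b = 1 - exp (- dQ / b) * exp (- (u - l - dQ) / b)"
    unfolding exp_neg_divide_mult by (simp add: Cp_def field_simps)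
  have "DeltaC l u dQ b = 2 * Cp l u (l + dQ) b / (2 * Cp l u l b)"
    by (simp add: DeltaC_def)
  also have "\<dots> = exp_ratio dQ (u - l - dQ) b"
    by (simp only: numerator denominator exp_ratio_def)
  finally show "DeltaC l u dQ b = exp_ratio dQ (u - l - dQ) b" .
qed

lemma exp_ratio_denominator_pos:
  fixes b c d :: real
  assumes "b > 0" "d > 0" "c \<ge> 0"
  shows "1 - exp (- d / b) * exp (- c / b) > 0"
proof -
  have "exp (- d / b) * exp (- c / b) = exp (- (d + c) / b)" by (rule exp_neg_divide_mult)
  also have "\<dots> < 1" using assms by (simp add: divide_neg_pos)
  finally show ?thesis by simp
qed

lemma exp_ratio_pos:
  fixes b c d :: real
  assumes "b > 0" "d > 0" "c \<ge> 0"
  shows "exp_ratio d c b > 0"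
proof -
  have "exp (- d / b) < 1" "exp (- c / b) \<le> 1" using assms by auto
  then have "2 - exp (- d / b) - exp (- c / b) > 0" by linarith
  then show ?thesis
    unfolding exp_ratio_def using exp_ratio_denominator_pos [OF assms] by (rule divide_pos_pos)
qed

lemma has_real_derivative_exp_neg_divide:
  assumes "x \<noteq> 0"
  shows "((\<lambda>x. exp (- a / x)) has_real_derivative exp (- a / x) * a / x\<^sup>2) (at x)"
  using assms by (auto intro!: derivative_eq_intros simp: power2_eq_square)

lemma has_real_derivative_exp_ratio:
  fixes b c d :: real
  assumes "b \<noteq> 0"
  defines "A \<equiv> exp (- d / b)" and "B \<equiv> exp (- c / b)"
  assumes "1 - A * B \<noteq> 0"
  shows "(exp_ratio d c has_real_derivative
           - (d * A * (1 - B)\<^sup>2 + c * B * (1 - A)\<^sup>2) / (b\<^sup>2 * (1 - A * B)\<^sup>2)) (at b)"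
proof -
  have dA: "((\<lambda>x. exp (- d / x)) has_real_derivative A * d / b\<^sup>2) (at b)"
    and dB: "((\<lambda>x. exp (- c / x)) has_real_derivative B * c / b\<^sup>2) (at b)"
    unfolding A_def B_def using assms(1) by (rule has_real_derivative_exp_neg_divide)+
  have "(exp_ratio d c has_real_derivative
      ((0 - A * d / b\<^sup>2 - B * c / b\<^sup>2) * (1 - A * B)
       - (2 - A - B) * (0 - (A * d / b\<^sup>2 * B + B * c / b\<^sup>2 * A)))
      / ((1 - A * B) * (1 - A * B))) (at b)"
    unfolding exp_ratio_def [abs_def]
    using DERIV_divide [OF DERIV_diff [OF DERIV_diff [OF DERIV_const [of 2] dA] dB]
                           DERIV_diff [OF DERIV_const [of 1] DERIV_mult [OF dA dB]], folded A_def B_def]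
      assms(4) by blast
  moreover have "(0 - A * d / b\<^sup>2 - B * c / b\<^sup>2) * (1 - A * B)
       - (2 - A - B) * (0 - (A * d / b\<^sup>2 * B + B * c / b\<^sup>2 * A))
     = - (d * A * (1 - B)\<^sup>2 + c * B * (1 - A)\<^sup>2) / b\<^sup>2"
    using assms(1) by (simp add: field_simps power2_eq_square)
  ultimately show ?thesis by (simp add: power2_eq_square)
qed

lemma exp_ratio_derivative_sign:
  fixes b c d :: real
  assumes "b > 0" "d > 0" "c \<ge> 0"
  obtains D where "(exp_ratio d c has_real_derivative D) (at b)" "D \<le> 0" "D = 0 \<longleftrightarrow> c = 0"
proof
  define A B where "A = exp (- d / b)" and "B = exp (- c / b)"
  have "0 < A" "A < 1" "0 < B" "B \<le> 1" "B = 1 \<longleftrightarrow> c = 0"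
    using assms by (auto simp: A_def B_def)
  moreover have "1 - A * B > 0"
    using exp_ratio_denominator_pos [OF assms] by (simp add: A_def B_def)
  ultimately have num: "d * A * (1 - B)\<^sup>2 \<ge> 0" "c * B * (1 - A)\<^sup>2 \<ge> 0"
    and num_zero: "d * A * (1 - B)\<^sup>2 + c * B * (1 - A)\<^sup>2 = 0 \<longleftrightarrow> c = 0"
    and den: "b\<^sup>2 * (1 - A * B)\<^sup>2 > 0"
    using assms by (auto simp: add_nonneg_eq_0_iff)
  define D where "D = - (d * A * (1 - B)\<^sup>2 + c * B * (1 - A)\<^sup>2) / (b\<^sup>2 * (1 - A * B)\<^sup>2)"
  show "(exp_ratio d c has_real_derivative D) (at b)"
    unfolding D_def A_def B_def using exp_ratio_denominator_pos [OF assms] \<open>b > 0\<close>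
    by (intro has_real_derivative_exp_ratio) auto
  show "D \<le> 0" unfolding D_def using num den by (simp add: divide_nonpos_pos)
  show "D = 0 \<longleftrightarrow> c = 0"
    unfolding D_def divide_eq_0_iff neg_equal_0_iff_equal using num_zero den by auto
qed

lemma has_real_derivative_divide_const_minus_ln:
  fixes g :: "real \<Rightarrow> real"
  assumes "(g has_real_derivative D) (at x)" "g x > 0" "k - ln (g x) \<noteq> 0"
  shows "((\<lambda>x. q / (k - ln (g x))) has_real_derivative q * D / (g x * (k - ln (g x))\<^sup>2)) (at x)"
  using assms by (auto intro!: derivative_eq_intros simp: power2_eq_square field_simps)

theorem lemma4p2:
  fixes l u dQ eps delta :: real
  assumes "l < u" and "0 < dQ" and "dQ \<le> u - l"
    and "0 \<le> eps" and "0 \<le> delta" and "delta < 1"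
  shows "(\<forall>b>0. \<exists>D. (DeltaC l u dQ has_real_derivative D) (at b) \<and> D \<le> 0
                    \<and> (D = 0 \<longleftrightarrow> dQ = u - l))
       \<and> (\<forall>b>0. eps - ln (DeltaC l u dQ b) - ln (1 - delta) \<noteq> 0 \<longrightarrow>
              (\<exists>D. (fmap l u dQ eps delta has_real_derivative D) (at b) \<and> D \<le> 0
                    \<and> (D = 0 \<longleftrightarrow> dQ = u - l)))"
proof (intro conjI allI impI)
  have gap: "u - l - dQ \<ge> 0" "u - l - dQ = 0 \<longleftrightarrow> dQ = u - l" using assms by auto
  fix b :: real
  assume "b > 0"
  then obtain D where D: "(DeltaC l u dQ has_real_derivative D) (at b)" "D \<le> 0" "D = 0 \<longleftrightarrow> dQ = u - l"
    using exp_ratio_derivative_sign [OF _ \<open>0 < dQ\<close> gap(1)] unfolding DeltaC_eq_exp_ratio gap(2) by blast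
  then show "\<exists>D. (DeltaC l u dQ has_real_derivative D) (at b) \<and> D \<le> 0 \<and> (D = 0 \<longleftrightarrow> dQ = u - l)"
    by blast
  assume "eps - ln (DeltaC l u dQ b) - ln (1 - delta) \<noteq> 0"
  then have denom: "(eps - ln (1 - delta)) - ln (DeltaC l u dQ b) \<noteq> 0" by simp
  have pos: "DeltaC l u dQ b > 0"
    unfolding DeltaC_eq_exp_ratio using exp_ratio_pos [OF \<open>b > 0\<close> \<open>0 < dQ\<close> gap(1)] .
  have "fmap l u dQ eps delta = (\<lambda>b. dQ / ((eps - ln (1 - delta)) - ln (DeltaC l u dQ b)))"
    by (simp add: fmap_def [abs_def] algebra_simps)
  moreover define E where "E = dQ * D / (DeltaC l u dQ b * ((eps - ln (1 - delta)) - ln (DeltaC l u dQ b))\<^sup>2)"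
  ultimately have "(fmap l u dQ eps delta has_real_derivative E) (at b)"
    using has_real_derivative_divide_const_minus_ln [OF D(1) pos denom] by simp
  moreover have "E \<le> 0" "E = 0 \<longleftrightarrow> dQ = u - l"
    unfolding E_def using \<open>0 < dQ\<close> pos denom D(2,3)
    by (auto simp: divide_nonpos_pos mult_nonneg_nonpos)
  ultimately show "\<exists>E. (fmap l u dQ eps delta has_real_derivative E) (at b) \<and> E \<le> 0 \<and> (E = 0 \<longleftrightarrow> dQ = u - l)"
    by blast
qed

end
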